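(* Let $n\ge 1$. The cyclic group $\mathbb{Z}_n$ is code-perfect if and only if $n$ is odd, or $n=2d$ where $d=2$ or $d$ is odd.
   Context: For a subgroup $H$ of a finite abelian group $A$ (written additively with identity $0$), the subgroup sum graph $\Gamma_{A,H}$ is the simple undirected graph with vertex set $A$ in which distinct vertices $x,y$ are adjacent if and only if $x+y\in H\setminus\{0\}$. A perfect code in a graph is a set $C$ of vertices that is independent and such that every vertex not in $C$ is adjacent to exactly one vertex of $C$. A finite group $G$ is code-perfect if $\Gamma_{G,H}$ admits a perfect code for every normal subgroup $H$ of $G$. *)

theory Defs
  imports "HOL-Algebra.Algebra"
begin

text \<open>Subgroup sum graph: vertex set the carrier of G; distinct x, y adjacent iff
  x \<otimes> y \<in> H - {\<one>} (the group operation written additively in the paper).\<close>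
definition sum_graph_adj :: "('a, 'b) monoid_scheme \<Rightarrow> 'a set \<Rightarrow> 'a \<Rightarrow> 'a \<Rightarrow> bool" where
  "sum_graph_adj G H x y \<longleftrightarrow>
     x \<in> carrier G \<and> y \<in> carrier G \<and> x \<noteq> y \<and> x \<otimes>\<^bsub>G\<^esub> y \<in> H - {\<one>\<^bsub>G\<^esub>}"

definition perfect_code :: "('a, 'b) monoid_scheme \<Rightarrow> 'a set \<Rightarrow> 'a set \<Rightarrow> bool" where
  "perfect_code G H C \<longleftrightarrow>
     C \<subseteq> carrier G \<and>
     (\<forall>x\<in>C. \<forall>y\<in>C. \<not> sum_graph_adj G H x y) \<and>
     (\<forall>v \<in> carrier G - C. \<exists>!c. c \<in> C \<and> sum_graph_adj G H v c)"

definition code_perfect :: "('a, 'b) monoid_scheme \<Rightarrow> bool" where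
  "code_perfect G \<longleftrightarrow> (\<forall>H. H \<lhd> G \<longrightarrow> (\<exists>C. perfect_code G H C))"

end

theory Submission
  imports Defs
begin

text \<open>
  In an abelian group call \<open>x\<close> and \<open>y\<close> equivalent if \<open>y \<in> H x \<union> H x\<inverse>\<close>; the class of \<open>v\<close> contains
  every neighbour of \<open>v\<close> in the subgroup sum graph. Choose a representative \<open>r\<close> in each class,
  with \<open>r\<^sup>2 = 1\<close> whenever the class contains such an element, and let the code consist of all
  \<open>r\<close> and \<open>r\<inverse>\<close>. It is independent, and a vertex \<open>v\<close> outside it is adjacent to \<open>r\<close> or to
  \<open>r\<inverse>\<close>; to both only if \<open>r \<noteq> r\<inverse>\<close>, and then \<open>1, vr, vr\<inverse>\<close> are three distinct elements
  of \<open>H\<close> and \<open>v\<^sup>2 \<in> H\<close>, while by the choice of \<open>r\<close> the coset \<open>Hv\<close> has no element of order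
  at most 2. Conversely, if \<open>a\<^sup>2 \<in> H\<close> then the coset \<open>Ha\<close> is closed under inversion and
  induces a complete multipartite graph with parts \<open>{x, x\<inverse>}\<close>, which has no perfect code when
  \<open>|H| \<ge> 3\<close> and \<open>Ha\<close> has no element of order at most 2.

  For \<open>\<int>\<^sub>n\<close> with \<open>n\<close> dividing \<open>2d\<close>, \<open>d\<close> odd, the element \<open>a\<^sup>d\<close> of \<open>Ha\<close> has order at most 2;
  for \<open>n = 4\<close> every subgroup has at most two elements or is the whole group; and for
  \<open>4 | n \<ge> 8\<close> the subgroup of even residues and its odd coset obstruct a perfect code.
\<close>

lemma (in group) mult_eq_one_iff_eq_inv:
  "x \<in> carrier G \<Longrightarrow> y \<in> carrier G \<Longrightarrow> x \<otimes> y = \<one> \<longleftrightarrow> x = inv y"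
  by (metis inv_equality l_inv)

lemma (in group) mult_mem_iff_mem_rcos_inv:
  "subgroup H G \<Longrightarrow> x \<in> carrier G \<Longrightarrow> y \<in> carrier G \<Longrightarrow> x \<otimes> y \<in> H \<longleftrightarrow> x \<in> H #> inv y"
  using subgroup.rcos_module[OF _ is_group inv_closed, of H y x] by simp

lemma (in group) subgroup_of_order_4:
  assumes "order G = 4" "subgroup H G"
  shows "card H \<le> 2 \<or> H = carrier G"
proof -
  have "card H dvd 4"
    using lagrange[OF assms(2)] assms(1) by (metis dvd_triv_right)
  then have "card H \<le> 2 \<or> card H = card (carrier G)"
    using assms(1) dvd_imp_le[of "card H" 4] by (cases "card H = 3") (auto simp: order_def)
  then show ?thesis
    using card_subset_eq subgroup.subset[OF assms(2)] assms(1)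
    by (metis order_def order_gt_0_iff_finite zero_less_numeral)
qed

lemma (in comm_group) inv_mem_rcos_inv:
  assumes H: "subgroup H G" and c: "c \<in> carrier G" and y: "y \<in> H #> c"
  shows "inv y \<in> H #> inv c"
proof -
  have yG: "y \<in> carrier G" using subgroup.elemrcos_carrier[OF H is_group c y] .
  have "inv (y \<otimes> inv c) \<in> H"
    using subgroup.rcos_module_imp[OF H is_group c y] by (rule subgroup.m_inv_closed[OF H])
  moreover have "inv (y \<otimes> inv c) = inv y \<otimes> inv (inv c)"
    using yG c by (simp add: inv_mult)
  ultimately show ?thesis
    using subgroup.rcos_module_rev[OF H is_group inv_closed[OF c] inv_closed[OF yG]] by simp
qed

lemma (in comm_group) subgroup_squares: "subgroup ((\<lambda>x. x \<otimes> x) ` carrier G) G"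
proof (rule subgroupI)
  fix a assume "a \<in> (\<lambda>x. x \<otimes> x) ` carrier G"
  then obtain x where "x \<in> carrier G" "a = x \<otimes> x" by blast
  then show "inv a \<in> (\<lambda>x. x \<otimes> x) ` carrier G"
    by (auto simp: inv_mult)
next
  fix a b assume "a \<in> (\<lambda>x. x \<otimes> x) ` carrier G" "b \<in> (\<lambda>x. x \<otimes> x) ` carrier G"
  then obtain x y where "x \<in> carrier G" "y \<in> carrier G" "a = x \<otimes> x" "b = y \<otimes> y" by blast
  then have "a \<otimes> b = (x \<otimes> y) \<otimes> (x \<otimes> y)" "x \<otimes> y \<in> carrier G"
    by (simp_all add: m_ac)
  then show "a \<otimes> b \<in> (\<lambda>x. x \<otimes> x) ` carrier G" by blast
qed auto

lemma (in comm_group) code_perfect_iff_subgroups: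
  "code_perfect G \<longleftrightarrow> (\<forall>H. subgroup H G \<longrightarrow> (\<exists>C. perfect_code G H C))"
  by (auto simp: code_perfect_def subgroup_imp_normal dest: normal_imp_subgroup)

context comm_group
begin

context
  fixes H assumes H: "subgroup H G"
begin

definition sym_rcos :: "'a \<Rightarrow> 'a set" where
  "sym_rcos c = (H #> c) \<union> (H #> inv c)"

lemma sym_rcos_self: "c \<in> carrier G \<Longrightarrow> c \<in> sym_rcos c"
  by (simp add: sym_rcos_def rcos_self[OF _ H])

lemma sym_rcos_inv: "c \<in> carrier G \<Longrightarrow> sym_rcos (inv c) = sym_rcos c"
  by (auto simp: sym_rcos_def)

lemma sym_rcos_eq:
  assumes c: "c \<in> carrier G" and y: "y \<in> sym_rcos c"
  shows "sym_rcos y = sym_rcos c"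
proof -
  have rcos: "sym_rcos y = sym_rcos x" if x: "x \<in> carrier G" and yx: "y \<in> H #> x" for x
    using repr_independence[OF yx x H] repr_independence[OF inv_mem_rcos_inv[OF H x yx] inv_closed[OF x] H]
    by (simp add: sym_rcos_def)
  from y consider "y \<in> H #> c" | "y \<in> H #> inv c" unfolding sym_rcos_def by blast
  then show ?thesis
    by cases (use rcos c sym_rcos_inv in auto)
qed

lemma mult_mem_imp_mem_sym_rcos:
  "x \<in> carrier G \<Longrightarrow> y \<in> carrier G \<Longrightarrow> x \<otimes> y \<in> H \<Longrightarrow> x \<in> sym_rcos y"
  by (simp add: mult_mem_iff_mem_rcos_inv[OF H] sym_rcos_def)

definition sym_rcos_rep :: "'a \<Rightarrow> 'a" where
  "sym_rcos_rep c =
     (SOME x. x \<in> sym_rcos c \<and> ((\<exists>y\<in>sym_rcos c. y \<otimes> y = \<one>) \<longrightarrow> x \<otimes> x = \<one>))"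

lemma sym_rcos_rep:
  assumes "c \<in> carrier G"
  shows "sym_rcos_rep c \<in> sym_rcos c"
    and "\<exists>y\<in>sym_rcos c. y \<otimes> y = \<one> \<Longrightarrow> sym_rcos_rep c \<otimes> sym_rcos_rep c = \<one>"
proof -
  have "\<exists>x. x \<in> sym_rcos c \<and> ((\<exists>y\<in>sym_rcos c. y \<otimes> y = \<one>) \<longrightarrow> x \<otimes> x = \<one>)"
    using sym_rcos_self[OF assms] by blast
  from someI_ex[OF this] show "sym_rcos_rep c \<in> sym_rcos c"
    and "\<exists>y\<in>sym_rcos c. y \<otimes> y = \<one> \<Longrightarrow> sym_rcos_rep c \<otimes> sym_rcos_rep c = \<one>"
    unfolding sym_rcos_rep_def by blast+
qed

lemma sym_rcos_subset: "c \<in> carrier G \<Longrightarrow> sym_rcos c \<subseteq> carrier G"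
  using r_coset_subset_G[OF subgroup.subset[OF H]] by (simp add: sym_rcos_def)

lemma sym_rcos_rep_carrier: "c \<in> carrier G \<Longrightarrow> sym_rcos_rep c \<in> carrier G"
  using sym_rcos_rep(1) sym_rcos_subset by blast

lemma sym_rcos_rep_eq:
  "c \<in> carrier G \<Longrightarrow> y \<in> sym_rcos c \<Longrightarrow> sym_rcos_rep y = sym_rcos_rep c"
  unfolding sym_rcos_rep_def by (simp only: sym_rcos_eq)

definition sum_graph_code :: "'a set" where
  "sum_graph_code = {c \<in> carrier G. c = sym_rcos_rep c \<or> c = inv (sym_rcos_rep c)}"

lemma sym_rcos_rep_mem_sum_graph_code:
  assumes c: "c \<in> carrier G"
  shows "sym_rcos_rep c \<in> sum_graph_code" and "inv (sym_rcos_rep c) \<in> sum_graph_code"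
proof -
  let ?r = "sym_rcos_rep c"
  have r: "?r \<in> sym_rcos c" "?r \<in> carrier G"
    using sym_rcos_rep(1)[OF c] sym_rcos_rep_carrier[OF c] by auto
  have "sym_rcos_rep ?r = ?r"
    using sym_rcos_rep_eq[OF c r(1)] .
  moreover have "sym_rcos_rep (inv ?r) = ?r"
    using sym_rcos_rep_eq[OF r(2) sym_rcos_self[OF inv_closed[OF r(2)], unfolded sym_rcos_inv[OF r(2)]]]
      \<open>sym_rcos_rep ?r = ?r\<close> by simp
  ultimately show "?r \<in> sum_graph_code" "inv ?r \<in> sum_graph_code"
    using r(2) by (auto simp: sum_graph_code_def)
qed

lemma sum_graph_code_mem_sym_rcos:
  assumes v: "v \<in> carrier G" and c: "c \<in> sum_graph_code" "c \<in> sym_rcos v"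
  shows "c = sym_rcos_rep v \<or> c = inv (sym_rcos_rep v)"
  using c sym_rcos_rep_eq[OF v c(2)] by (simp add: sum_graph_code_def)

lemma sum_graph_code_independent:
  assumes x: "x \<in> sum_graph_code" and y: "y \<in> sum_graph_code"
  shows "\<not> sum_graph_adj G H x y"
proof
  assume "sum_graph_adj G H x y"
  then have xy: "x \<in> carrier G" "y \<in> carrier G" "x \<noteq> y" "x \<otimes> y \<in> H" "x \<otimes> y \<noteq> \<one>"
    by (auto simp: sum_graph_adj_def)
  let ?r = "sym_rcos_rep x"
  have "y \<in> sym_rcos x"
    using mult_mem_imp_mem_sym_rcos[OF xy(2,1)] xy(1,2,4) by (simp add: m_comm)
  then have "y = ?r \<or> y = inv ?r"
    using sum_graph_code_mem_sym_rcos[OF xy(1) y] by blast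
  moreover have "x = ?r \<or> x = inv ?r"
    using sum_graph_code_mem_sym_rcos[OF xy(1) x sym_rcos_self[OF xy(1)]] .
  ultimately have "x \<otimes> y = ?r \<otimes> inv ?r \<or> x \<otimes> y = inv ?r \<otimes> ?r"
    using xy(3) by (auto simp: m_comm)
  then show False
    using xy(5) sym_rcos_rep_carrier[OF xy(1)] by auto
qed

lemma sum_graph_adj_sym_rcos_rep_iff:
  assumes v: "v \<in> carrier G" "v \<notin> sum_graph_code"
    and c: "c \<in> {sym_rcos_rep v, inv (sym_rcos_rep v)}"
  shows "sum_graph_adj G H v c \<longleftrightarrow> v \<otimes> c \<in> H"
proof -
  have "c \<in> carrier G" "c \<in> sum_graph_code" "inv c \<in> sum_graph_code"
    using c sym_rcos_rep_carrier[OF v(1)] sym_rcos_rep_mem_sum_graph_code[OF v(1)] by auto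
  then show ?thesis
    using v mult_eq_one_iff_eq_inv[OF v(1)] by (auto simp: sum_graph_adj_def)
qed

lemma sym_rcos_rep_self_inverse_if_mult_mem:
  assumes fin: "finite H" and crit: "card H \<le> 2 \<or> (\<forall>a\<in>carrier G. a \<otimes> a \<in> H \<longrightarrow> (\<exists>x\<in>H #> a. x \<otimes> x = \<one>))"
    and v: "v \<in> carrier G" "v \<notin> sum_graph_code"
    and both: "v \<otimes> sym_rcos_rep v \<in> H" "v \<otimes> inv (sym_rcos_rep v) \<in> H"
  shows "inv (sym_rcos_rep v) = sym_rcos_rep v"
proof (rule ccontr)
  let ?r = "sym_rcos_rep v"
  assume "inv ?r \<noteq> ?r"
  have r: "?r \<in> carrier G" "?r \<in> sum_graph_code" "inv ?r \<in> sum_graph_code"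
    using sym_rcos_rep_carrier[OF v(1)] sym_rcos_rep_mem_sum_graph_code[OF v(1)] by auto
  from crit show False
  proof
    assume "card H \<le> 2"
    have "v \<otimes> ?r \<noteq> \<one>"
      using mult_eq_one_iff_eq_inv[OF v(1) r(1)] v(2) r(3) by auto
    moreover have "v \<otimes> inv ?r \<noteq> \<one>"
      using mult_eq_one_iff_eq_inv[OF v(1) inv_closed[OF r(1)]] v(2) r by auto
    moreover have "v \<otimes> ?r \<noteq> v \<otimes> inv ?r"
      using \<open>inv ?r \<noteq> ?r\<close> v(1) r(1) by simp
    ultimately have "card {\<one>, v \<otimes> ?r, v \<otimes> inv ?r} = 3"
      by simp
    moreover have "card {\<one>, v \<otimes> ?r, v \<otimes> inv ?r} \<le> card H"
      using both subgroup.one_closed[OF H] by (intro card_mono[OF fin]) simp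
    ultimately show False
      using \<open>card H \<le> 2\<close> by simp
  next
    assume halving: "\<forall>a\<in>carrier G. a \<otimes> a \<in> H \<longrightarrow> (\<exists>x\<in>H #> a. x \<otimes> x = \<one>)"
    have "v \<otimes> v = (v \<otimes> ?r) \<otimes> (v \<otimes> inv ?r)"
      using v(1) r(1) by (simp add: m_ac)
    then have "v \<otimes> v \<in> H"
      using both subgroup.m_closed[OF H] by simp
    then obtain x where "x \<in> H #> v" "x \<otimes> x = \<one>"
      using halving v(1) by blast
    then have "?r \<otimes> ?r = \<one>"
      using sym_rcos_rep(2)[OF v(1)] by (auto simp: sym_rcos_def)
    then show False
      using \<open>inv ?r \<noteq> ?r\<close> r(1) by (simp add: mult_eq_one_iff_eq_inv)
  qed
qed

lemma sum_graph_code_unique_neighbour: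
  assumes fin: "finite H" and crit: "card H \<le> 2 \<or> (\<forall>a\<in>carrier G. a \<otimes> a \<in> H \<longrightarrow> (\<exists>x\<in>H #> a. x \<otimes> x = \<one>))"
    and v: "v \<in> carrier G" "v \<notin> sum_graph_code"
  shows "\<exists>!c. c \<in> sum_graph_code \<and> sum_graph_adj G H v c"
proof -
  let ?r = "sym_rcos_rep v"
  note adj_iff = sum_graph_adj_sym_rcos_rep_iff[OF v]
  have code: "?r \<in> sum_graph_code" "inv ?r \<in> sum_graph_code"
    using sym_rcos_rep_mem_sum_graph_code[OF v(1)] by auto
  have "v \<in> sym_rcos ?r"
    using sym_rcos_eq[OF v(1) sym_rcos_rep(1)[OF v(1)]] sym_rcos_self[OF v(1)] by simp
  then have some_adj: "v \<otimes> ?r \<in> H \<or> v \<otimes> inv ?r \<in> H"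
    using v(1) sym_rcos_rep_carrier[OF v(1)] by (auto simp: sym_rcos_def mult_mem_iff_mem_rcos_inv[OF H])
  have adj_only: "c = ?r \<or> c = inv ?r" if "c \<in> sum_graph_code" "sum_graph_adj G H v c" for c
  proof -
    have "c \<in> carrier G" "v \<otimes> c \<in> H"
      using that(2) by (auto simp: sum_graph_adj_def)
    then have "c \<in> sym_rcos v"
      using mult_mem_imp_mem_sym_rcos v(1) by (simp add: m_comm)
    then show ?thesis
      using sum_graph_code_mem_sym_rcos[OF v(1) that(1)] by blast
  qed
  note both_adj = sym_rcos_rep_self_inverse_if_mult_mem[OF fin crit v]
  show ?thesis
  proof (cases "v \<otimes> ?r \<in> H")
    case True
    have "c = ?r" if "c \<in> sum_graph_code" "sum_graph_adj G H v c" for c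
      using adj_only[OF that] adj_iff[of c] that(2) both_adj True by auto
    then show ?thesis
      using True adj_iff[of ?r] code(1) by blast
  next
    case False
    then have "v \<otimes> inv ?r \<in> H"
      using some_adj by blast
    have "c = inv ?r" if "c \<in> sum_graph_code" "sum_graph_adj G H v c" for c
      using adj_only[OF that] adj_iff[of c] that(2) False by auto
    then show ?thesis
      using \<open>v \<otimes> inv ?r \<in> H\<close> adj_iff[of "inv ?r"] code(2) by blast
  qed
qed

lemma sum_graph_code_perfect:
  assumes "finite H"
    and "card H \<le> 2 \<or> (\<forall>a\<in>carrier G. a \<otimes> a \<in> H \<longrightarrow> (\<exists>x\<in>H #> a. x \<otimes> x = \<one>))"
  shows "perfect_code G H sum_graph_code"
  using sum_graph_code_independent sum_graph_code_unique_neighbour[OF assms]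
  by (auto simp: perfect_code_def sum_graph_code_def)

lemma square_rcos_eq_rcos_inv:
  assumes a: "a \<in> carrier G" "a \<otimes> a \<in> H" and x: "x \<in> H #> a"
  shows "H #> a = H #> inv x"
proof -
  have "inv a \<otimes> inv a \<in> H"
    using subgroup.m_inv_closed[OF H a(2)] a(1) by (simp add: inv_mult)
  then have "inv a \<in> H #> a"
    using mult_mem_iff_mem_rcos_inv[OF H] a(1) by simp
  then show ?thesis
    using repr_independence[OF inv_mem_rcos_inv[OF H a(1) x] inv_closed[OF a(1)] H]
      repr_independence[OF _ a(1) H] by simp
qed

lemma square_rcos_inv_closed:
  assumes "a \<in> carrier G" "a \<otimes> a \<in> H" "x \<in> H #> a"
  shows "inv x \<in> H #> a"
  using square_rcos_eq_rcos_inv[OF assms] rcos_self[OF inv_closed H]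
    r_coset_subset_G[OF subgroup.subset[OF H]] assms by blast

lemma sum_graph_adj_in_square_rcos:
  assumes a: "a \<in> carrier G" "a \<otimes> a \<in> H" and x: "x \<in> H #> a"
  shows "sum_graph_adj G H x y \<longleftrightarrow> y \<in> H #> a \<and> x \<noteq> y \<and> x \<noteq> inv y"
proof -
  have S: "H #> a \<subseteq> carrier G"
    using r_coset_subset_G[OF subgroup.subset[OF H] a(1)] .
  have xG: "x \<in> carrier G"
    using x S by blast
  have "x \<otimes> y \<in> H \<longleftrightarrow> y \<in> H #> a" if "y \<in> carrier G" for y
    using mult_mem_iff_mem_rcos_inv[OF H that xG] square_rcos_eq_rcos_inv[OF a x] m_comm[OF xG that]
    by simp
  then show ?thesis
    using xG S mult_eq_one_iff_eq_inv[OF xG] by (auto simp: sum_graph_adj_def)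
qed

lemma perfect_code_imp_involution_in_rcos:
  assumes C: "perfect_code G H C" and big: "\<not> card H \<le> 2"
    and a: "a \<in> carrier G" "a \<otimes> a \<in> H"
  shows "\<exists>x\<in>H #> a. x \<otimes> x = \<one>"
proof (rule ccontr)
  let ?S = "H #> a"
  assume no_involution: "\<not> (\<exists>x\<in>?S. x \<otimes> x = \<one>)"
  have S: "?S \<subseteq> carrier G"
    using r_coset_subset_G[OF subgroup.subset[OF H] a(1)] .
  have no_inv: "inv x \<noteq> x" if "x \<in> ?S" for x
    using that S no_involution by (metis r_inv subsetD)
  note inv_S = square_rcos_inv_closed[OF a] and adj_S = sum_graph_adj_in_square_rcos[OF a]
  have indep: "\<not> sum_graph_adj G H x y" if "x \<in> C" "y \<in> C" for x y
    using C that by (simp add: perfect_code_def)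
  have uniq: "\<exists>!c. c \<in> C \<and> sum_graph_adj G H v c" if "v \<in> carrier G" "v \<notin> C" for v
    using C that by (simp add: perfect_code_def)
  obtain c where c: "c \<in> C" "c \<in> ?S"
  proof (cases "a \<in> C")
    case False
    then obtain c where "c \<in> C" "sum_graph_adj G H a c"
      using uniq[OF a(1)] by blast
    then show ?thesis
      using that adj_S[OF rcos_self[OF a(1) H]] by blast
  qed (use that rcos_self[OF a(1) H] in blast)
  have c_inv: "inv c \<in> ?S" "inv c \<in> carrier G" "c \<in> carrier G"
    using inv_S[OF c(2)] c(2) S by auto
  have "inv c \<in> C"
  proof (rule ccontr)
    assume "inv c \<notin> C"
    then obtain c' where c': "c' \<in> C" "sum_graph_adj G H (inv c) c'"
      using uniq[OF c_inv(2)] by blast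
    then have c'S: "c' \<in> ?S" "c' \<noteq> inv c" "c' \<noteq> c"
      using adj_S[OF c_inv(1)] by auto
    then have "c \<noteq> inv c'"
      using S c_inv(3) by auto
    then have "sum_graph_adj G H c c'"
      using adj_S[OF c(2)] c'S by auto
    then show False
      using indep c(1) c'(1) by blast
  qed
  have "card {c, inv c} \<le> 2"
    by (cases "c = inv c") auto
  then have "card {c, inv c} < card ?S"
    using card_rcosets_equal[OF rcosetsI[OF subgroup.subset[OF H] a(1)] subgroup.subset[OF H]] big
    by simp
  then obtain z where z: "z \<in> ?S" "z \<noteq> c" "z \<noteq> inv c"
    using card_mono[of "{c, inv c}" ?S] by auto
  have "sum_graph_adj G H z c" "sum_graph_adj G H z (inv c)"
    using adj_S[OF z(1)] z c(2) c_inv by auto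
  moreover from this(1) have "z \<notin> C"
    using indep c(1) by blast
  ultimately show False
    using uniq[of z] z(1) S c(1) \<open>inv c \<in> C\<close> no_inv[OF c(2)] by blast
qed

theorem sum_graph_has_perfect_code_iff:
  assumes "finite (carrier G)"
  shows "(\<exists>C. perfect_code G H C) \<longleftrightarrow>
           card H \<le> 2 \<or> (\<forall>a\<in>carrier G. a \<otimes> a \<in> H \<longrightarrow> (\<exists>x\<in>H #> a. x \<otimes> x = \<one>))"
  using finite_subset[OF subgroup.subset[OF H] assms] sum_graph_code_perfect
    perfect_code_imp_involution_in_rcos by blast

end

lemma rcos_has_involution_if_pow_eq_one:
  fixes d :: nat
  assumes H: "subgroup H G" and a: "a \<in> carrier G" "a \<otimes> a \<in> H"
    and d: "odd d" "a [^] (2 * d) = \<one>"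
  shows "\<exists>x\<in>H #> a. x \<otimes> x = \<one>"
proof
  obtain k where "d = Suc (k + k)"
    using d(1) by (metis oddE mult_2 Suc_eq_plus1)
  then have "a [^] d = (a \<otimes> a) [^] k \<otimes> a"
    using a(1) by (simp add: nat_pow_distrib nat_pow_mult)
  moreover have "(a \<otimes> a) [^] k \<in> H"
    using subgroup_int_pow_closed[OF H a(2), of "int k"] by (simp add: int_pow_int)
  ultimately show "a [^] d \<in> H #> a"
    using rcosI[OF _ subgroup.subset[OF H] a(1)] by simp
  show "a [^] d \<otimes> a [^] d = \<one>"
    using a(1) d(2) by (simp add: nat_pow_mult mult_2)
qed

lemma code_perfect_if_pow_eq_one:
  fixes d :: nat
  assumes "finite (carrier G)" "odd d" "\<And>a. a \<in> carrier G \<Longrightarrow> a [^] (2 * d) = \<one>"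
  shows "code_perfect G"
  unfolding code_perfect_iff_subgroups
  using sum_graph_has_perfect_code_iff[OF _ assms(1)] rcos_has_involution_if_pow_eq_one assms(2,3)
  by blast

lemma code_perfect_if_order_4:
  assumes "order G = 4"
  shows "code_perfect G"
  unfolding code_perfect_iff_subgroups
proof (intro allI impI)
  fix H assume H: "subgroup H G"
  have "\<one> \<in> H #> a" if "H = carrier G" "a \<in> carrier G" for a
    using rcosI[of "inv a" H a] that by simp
  then show "\<exists>C. perfect_code G H C"
    using sum_graph_has_perfect_code_iff[OF H] subgroup_of_order_4[OF assms H] assms
    by (metis order_gt_0_iff_finite zero_less_numeral l_one one_closed)
qed

end

lemma order_integer_mod_group: "n \<ge> 1 \<Longrightarrow> order (integer_mod_group n) = n"
  by (simp add: order_def carrier_integer_mod_group)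

lemma integer_mod_group_not_code_perfect:
  assumes "4 dvd n" "8 \<le> n"
  shows "\<not> code_perfect (integer_mod_group n)"
proof
  let ?G = "integer_mod_group n"
  let ?H = "(\<lambda>x. x \<otimes>\<^bsub>?G\<^esub> x) ` carrier ?G"
  have car: "carrier ?G = {0..<int n}"
    using assms(2) by (simp add: carrier_integer_mod_group)
  have H: "subgroup ?H ?G"
    by (rule comm_group.subgroup_squares[OF abelian_integer_mod_group])
  assume "code_perfect ?G"
  then obtain C where C: "perfect_code ?G ?H C"
    using H comm_group.code_perfect_iff_subgroups[OF abelian_integer_mod_group] by blast
  have sq: "x \<otimes>\<^bsub>?G\<^esub> x \<in> ?H" if "x \<in> carrier ?G" for x
    using that by blast
  have small: "(1::int) \<in> carrier ?G" "(2::int) \<in> carrier ?G"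
    using car assms(2) by auto
  have "(2::int) mod int n = 2" "(4::int) mod int n = 4"
    using assms(2) by (auto intro: mod_pos_pos_trivial)
  then have "{0, 2, 4} \<subseteq> ?H"
    using sq[OF integer_mod_group_0] sq[OF small(1)] sq[OF small(2)] car by simp
  moreover have "finite ?H"
    using car by simp
  ultimately have "\<not> card ?H \<le> 2"
    using card_mono[of ?H "{0, 2, 4}"] by simp
  then obtain x where x: "x \<in> ?H #>\<^bsub>?G\<^esub> 1" "x \<otimes>\<^bsub>?G\<^esub> x = 0"
    using comm_group.perfect_code_imp_involution_in_rcos[OF abelian_integer_mod_group H C _ small(1) sq[OF small(1)]]
    by auto
  then obtain y where "x = ((y + y) mod int n + 1) mod int n"
    by (auto simp: r_coset_def)
  moreover have n: "4 dvd int n" "2 dvd int n"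
    using assms(1) by presburger+
  ultimately have "odd x"
    by (simp add: dvd_mod_iff)
  moreover have "4 dvd x + x"
    using x(2) n(1) by (auto simp: mod_eq_0_iff_dvd intro: dvd_trans)
  ultimately show False
    by presburger
qed

lemma integer_mod_group_code_perfect:
  fixes d :: nat
  assumes "n \<ge> 1" "odd d" "n dvd 2 * d"
  shows "code_perfect (integer_mod_group n)"
proof (rule comm_group.code_perfect_if_pow_eq_one[OF abelian_integer_mod_group _ assms(2)])
  show "finite (carrier (integer_mod_group n))"
    using assms(1) by (simp add: carrier_integer_mod_group)
  have "int n dvd int (2 * d) * a" for a
    using assms(3) by (simp add: of_nat_dvd_iff[symmetric] del: of_nat_mult)
  then show "a [^]\<^bsub>integer_mod_group n\<^esub> (2 * d) = \<one>\<^bsub>integer_mod_group n\<^esub>" for a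
    by simp
qed

theorem corollary4p6:
  fixes n :: nat
  assumes "n \<ge> 1"
  shows "code_perfect (integer_mod_group n) \<longleftrightarrow>
         odd n \<or> (\<exists>d. n = 2 * d \<and> (d = 2 \<or> odd d))"
proof
  assume "code_perfect (integer_mod_group n)"
  then have "\<not> (4 dvd n \<and> 8 \<le> n)"
    using integer_mod_group_not_code_perfect by blast
  then show "odd n \<or> (\<exists>d. n = 2 * d \<and> (d = 2 \<or> odd d))"
    using assms by presburger
next
  assume "odd n \<or> (\<exists>d. n = 2 * d \<and> (d = 2 \<or> odd d))"
  then have "n = 4 \<or> (\<exists>d. odd d \<and> n dvd 2 * d)"
    by (auto intro: dvd_triv_right)
  then show "code_perfect (integer_mod_group n)"
    using integer_mod_group_code_perfect[OF assms] order_integer_mod_group[OF assms]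
      comm_group.code_perfect_if_order_4[OF abelian_integer_mod_group]
    by auto
qed

end
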